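(* Let $p\ge 1$, let $F:\mathbb{R}^p\to\mathbb{R}^p$ and $G(\boldsymbol{x}) := F(\boldsymbol{x})-\boldsymbol{x}$. Let $\boldsymbol{x}^\ast\in\mathbb{R}^p$ and let $M\in\mathbb{R}^{p\times p}$ be a fixed non-singular symmetric matrix defining $\|A\|_M := \|MAM\|_F$. Assume: (A1) $G$ is differentiable in an open convex set $D$ containing $\boldsymbol{x}^\ast$, $G(\boldsymbol{x}^\ast)=0$, $dG(\boldsymbol{x}^\ast)$ is non-singular, and for some constants $d>0$ and $K$ we have $\|dG(\boldsymbol{x})-dG(\boldsymbol{x}^\ast)\|\le K\|\boldsymbol{x}-\boldsymbol{x}^\ast\|^d$ for all $\boldsymbol{x}\in D$. (A2) There are a neighborhood $N_1$ of $\boldsymbol{x}^\ast$ with $N_1\subset D\cap S$ on which the update $\bar{\boldsymbol{x}}=\boldsymbol{x}-HG(\boldsymbol{x})$ is well-defined, a neighborhood $N_2$ of $dG(\boldsymbol{x}^\ast)^{-1}$ consisting of non-singular matrices on which the update $H\mapsto\bar H$ is well-defined, and non-negative constants $\alpha_1,\alpha_2$ such that for every $(\boldsymbol{x},H)\in N_1\times N_2$, $$\|\bar H-dG(\boldsymbol{x}^\ast)^{-1}\|_M\le\Big[1+\alpha_1\max\{\|F(\boldsymbol{x})-\boldsymbol{x}^\ast\|^d,\|\boldsymbol{x}-\boldsymbol{x}^\ast\|^d\}\Big]\|H-dG(\boldsymbol{x}^\ast)^{-1}\|_M+\alpha_2\max\{\|F(\boldsymbol{x})-\boldsymbol{x}^\ast\|^d,\|\boldsymbol{x}-\boldsymbol{x}^\ast\|^d\}.$$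 Then for each $r\in(0,1)$ there exist positive constants $\epsilon(r)$ and $\delta(r)$ such that whenever $\|\boldsymbol{x}_0-\boldsymbol{x}^\ast\|<\epsilon(r)$ and $\|H_0-dG(\boldsymbol{x}^\ast)^{-1}\|_M<\delta(r)$, the sequence defined by $\boldsymbol{x}_{k+1}=\boldsymbol{x}_k-H_kG(\boldsymbol{x}_k)$, $H_{k+1}=\bar H$ evaluated at $(\boldsymbol{x}_k,H_k)$, is well-defined and converges to $\boldsymbol{x}^\ast$. Furthermore $\|\boldsymbol{x}_{k+1}-\boldsymbol{x}^\ast\|\le r\|\boldsymbol{x}_k-\boldsymbol{x}^\ast\|$ for each $k\ge 0$, and the sequences $\{\|H_k\|\}$ and $\{\|H_k^{-1}\|\}$ are uniformly bounded.
   Context: $F$ is a majorization–minimization (MM) algorithm map and $G(\boldsymbol{x})=F(\boldsymbol{x})-\boldsymbol{x}$ its residual; $dG$ denotes the Jacobian of $G$. $\|\cdot\|$ is a chosen vector norm on $\mathbb{R}^p$ and, for matrices, its induced operator norm; $\|\cdot\|_F$ is the Frobenius norm. Standing assumption: the MM map is locally convergent to $\boldsymbol{x}^\ast$ in a neighborhood $S$ of $\boldsymbol{x}^\ast$ with linear rate $\tau$, i.e. $\|F(\boldsymbol{x})-\boldsymbol{x}^\ast\|\le\tau\|\boldsymbol{x}-\boldsymbol{x}^\ast\|$ for all $\boldsymbol{x}\in S$, with $\tau\in(0,1)$. For a pair $(\boldsymbol{x},H)$ with $\boldsymbol{x}\in\mathbb{R}^p$, $H\in\mathbb{R}^{p\times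 p}$, define $\boldsymbol{u}=F(\boldsymbol{x})-\boldsymbol{x}$, $\boldsymbol{v}=G(F(\boldsymbol{x}))-G(\boldsymbol{x})$, and the updates $\bar{\boldsymbol{x}}=\boldsymbol{x}-HG(\boldsymbol{x})$ and $\bar H=H-H\frac{\boldsymbol{v}\boldsymbol{v}^T}{\boldsymbol{v}^T\boldsymbol{v}}+\frac{\boldsymbol{u}\boldsymbol{v}^T}{\boldsymbol{v}^T\boldsymbol{v}}$ (defined when $\boldsymbol{v}\neq 0$). *)

theory Defs
  imports "HOL-Analysis.Analysis"
begin

definition is_vnorm :: "(real^'n \<Rightarrow> real) \<Rightarrow> bool" where
  "is_vnorm nv \<longleftrightarrow>
     (\<forall>x. 0 \<le> nv x) \<and> (\<forall>x. nv x = 0 \<longleftrightarrow> x = 0) \<and>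
     (\<forall>c x. nv (c *\<^sub>R x) = \<bar>c\<bar> * nv x) \<and>
     (\<forall>x y. nv (x + y) \<le> nv x + nv y)"

definition opnorm :: "(real^'n \<Rightarrow> real) \<Rightarrow> real^'n^'n \<Rightarrow> real" where
  "opnorm nv A = Sup ((\<lambda>x. nv (A *v x)) ` {x. nv x = 1})"

definition frob :: "real^'n^'n \<Rightarrow> real" where
  "frob A = sqrt (\<Sum>i\<in>UNIV. \<Sum>j\<in>UNIV. (A $ i $ j)\<^sup>2)"

definition normM :: "real^'n^'n \<Rightarrow> real^'n^'n \<Rightarrow> real" where
  "normM M A = frob (M ** A ** M)"

definition outer :: "real^'n \<Rightarrow> real^'n \<Rightarrow> real^'n^'n" where
  "outer u v = (\<chi> i j. u $ i * v $ j)"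

definition resid :: "(real^'n \<Rightarrow> real^'n) \<Rightarrow> real^'n \<Rightarrow> real^'n" where
  "resid F x = F x - x"

definition uvec :: "(real^'n \<Rightarrow> real^'n) \<Rightarrow> real^'n \<Rightarrow> real^'n" where
  "uvec F x = F x - x"

definition vvec :: "(real^'n \<Rightarrow> real^'n) \<Rightarrow> real^'n \<Rightarrow> real^'n" where
  "vvec F x = resid F (F x) - resid F x"

text \<open>Matrix update  Hbar = H - H v v^T/(v^T v) + u v^T/(v^T v).
  (When v = 0, Isabelle's convention 1/0 = 0 gives Hbar = H; this case only
  arises at points where the update is not defined in the paper.)\<close>
definition Hbar :: "(real^'n \<Rightarrow> real^'n) \<Rightarrow> real^'n \<Rightarrow> real^'n^'n \<Rightarrow> real^'n^'n" where
  "Hbar F x H =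
     (let u = uvec F x; v = vvec F x
      in H - (1 / (v \<bullet> v)) *\<^sub>R (H ** outer v v) + (1 / (v \<bullet> v)) *\<^sub>R outer u v)"

primrec qn_iter :: "(real^'n \<Rightarrow> real^'n) \<Rightarrow> real^'n \<Rightarrow> real^'n^'n \<Rightarrow> nat
                     \<Rightarrow> (real^'n) \<times> (real^'n^'n)" where
  "qn_iter F x0 H0 0 = (x0, H0)"
| "qn_iter F x0 H0 (Suc k) =
     (let (x, H) = qn_iter F x0 H0 k in (x - H *v resid F x, Hbar F x H))"

end

theory Submission
  imports Defs
begin

(* Write e_k = nv (x_k - xs) and eta_k = ||H_k - dG(xs)^-1||_M.  Since G(xs) = 0 and G is
   differentiable at xs, the step x - H G(x) contracts towards xs with any prescribed rate r
   once x is close to xs and H is close to dG(xs)^-1.  Hypothesis (A2) gives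
   eta_(k+1) + 1 <= (1 + (alpha1 + alpha2) e_k^d) (eta_k + 1), and while the contraction holds
   e_k^d decays geometrically with ratio r^d, so
   eta_k + 1 <= (eta_0 + 1) exp ((alpha1 + alpha2) e_0^d / (1 - r^d)).
   Small initial errors therefore keep (x_k, H_k) in the region where the contraction holds,
   and an induction closes the argument.  The bounds on H_k and H_k^-1 come from a perturbation
   estimate around dG(xs)^-1; all norms involved are compared through the Euclidean norm. *)

lemma matrix_inv_mult:
  fixes A :: "real^'n^'n"
  assumes "invertible A"
  shows "A ** matrix_inv A = mat 1" "matrix_inv A ** A = mat 1"
  using someI_ex[OF assms[unfolded invertible_def]] unfolding matrix_inv_def by auto

lemma frob_eq_norm: "frob A = norm A"
  unfolding frob_def norm_vec_def L2_set_def
  by (simp add: sum_nonneg)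

lemma normM_eq_norm: "normM M A = norm (M ** A ** M)"
  unfolding normM_def frob_eq_norm ..

lemma norm_matrix_vector_mult_le: "norm ((A::real^'n^'m) *v x) \<le> norm A * norm x"
proof -
  have "norm (A *v x) = L2_set (\<lambda>i. \<bar>A $ i \<bullet> x\<bar>) UNIV"
    by (simp add: norm_vec_def matrix_vector_mul_component)
  also have "\<dots> \<le> L2_set (\<lambda>i. norm (A $ i) * norm x) UNIV"
    by (intro L2_set_mono) (simp_all add: Cauchy_Schwarz_ineq2)
  also have "\<dots> = norm A * norm x"
    by (simp add: norm_vec_def L2_set_left_distrib)
  finally show ?thesis .
qed

lemma norm_equivalence_finite_dim:
  fixes nv :: "'a::euclidean_space \<Rightarrow> real"
  assumes nonneg: "\<And>x. 0 \<le> nv x" and definite: "\<And>x. nv x = 0 \<Longrightarrow> x = 0"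
    and homogeneous: "\<And>c x. nv (c *\<^sub>R x) = \<bar>c\<bar> * nv x"
    and subadditive: "\<And>x y. nv (x + y) \<le> nv x + nv y"
  shows "\<exists>c C. 0 < c \<and> 0 < C \<and> (\<forall>x. c * norm x \<le> nv x \<and> nv x \<le> C * norm x)"
proof -
  define C where "C = (\<Sum>b\<in>Basis. nv b) + 1"
  have C: "0 < C" unfolding C_def by (simp add: add_nonneg_pos nonneg sum_nonneg)
  have nv_sum: "nv (sum f B) \<le> (\<Sum>b\<in>B. nv (f b))" if "finite B" for f and B :: "'b set"
    using that
  proof induction
    case (insert b B)
    then show ?case using subadditive[of "f b" "sum f B"] by simp
  qed (use homogeneous[of 0] in simp)
  have upper: "nv x \<le> C * norm x" for x
  proof -
    have "nv x = nv (\<Sum>b\<in>Basis. (x \<bullet> b) *\<^sub>R b)" by (simp add: euclidean_representation)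
    also have "\<dots> \<le> (\<Sum>b\<in>Basis. \<bar>x \<bullet> b\<bar> * nv b)"
      by (rule order_trans[OF nv_sum]) (simp_all add: homogeneous)
    also have "\<dots> \<le> (\<Sum>b\<in>Basis. norm x * nv b)"
      by (intro sum_mono mult_right_mono Basis_le_norm nonneg)
    also have "\<dots> \<le> C * norm x" unfolding C_def by (simp add: sum_distrib_left algebra_simps)
    finally show ?thesis .
  qed
  have "C-lipschitz_on UNIV nv"
  proof (rule lipschitz_onI)
    fix x y
    have "nv x \<le> nv y + nv (x - y)" "nv y \<le> nv x + nv (y - x)"
      using subadditive[of y "x - y"] subadditive[of x "y - x"] by simp_all
    moreover have "nv (y - x) = nv (x - y)" using homogeneous[of "-1" "x - y"] by simp
    ultimately show "dist (nv x) (nv y) \<le> C * dist x y"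
      using upper[of "x - y"] by (simp add: dist_norm dist_real_def)
  qed (use C in simp)
  then have "continuous_on (sphere 0 1) nv"
    using lipschitz_on_continuous_on lipschitz_on_subset by blast
  moreover obtain b :: 'a where "b \<in> sphere 0 1"
    using nonempty_Basis by (metis mem_sphere_0 norm_Basis ex_in_conv)
  ultimately obtain z where z: "z \<in> sphere 0 1" and z_min: "\<And>y. y \<in> sphere 0 1 \<Longrightarrow> nv z \<le> nv y"
    using continuous_attains_inf[OF compact_sphere] by (metis empty_iff)
  have c: "0 < nv z" using z nonneg[of z] definite[of z] by force
  have "nv z * norm x \<le> nv x" for x
  proof (cases "x = 0")
    case False
    then have "nv z \<le> nv (x /\<^sub>R norm x)" by (intro z_min) simp
    then show ?thesis using False by (simp add: homogeneous field_simps)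
  qed (simp add: nonneg)
  with upper c C show ?thesis by blast
qed

lemma is_vnorm_equiv_norm:
  assumes "is_vnorm nv"
  shows "\<exists>c C. 0 < c \<and> 0 < C \<and> (\<forall>x. c * norm x \<le> nv x \<and> nv x \<le> C * norm x)"
  using assms unfolding is_vnorm_def by (intro norm_equivalence_finite_dim) auto

lemma norm_le_normM:
  fixes M :: "real^'n^'n"
  assumes "invertible M"
  shows "\<exists>\<kappa>>0. \<forall>A. norm A \<le> \<kappa> * normM M A"
proof -
  have "\<exists>c C. 0 < c \<and> 0 < C \<and> (\<forall>A. c * norm A \<le> normM M A \<and> normM M A \<le> C * norm A)"
  proof (rule norm_equivalence_finite_dim)
    fix A :: "real^'n^'n"
    assume "normM M A = 0"
    moreover have "matrix_inv M ** (M ** A ** M) ** matrix_inv M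
        = (matrix_inv M ** M) ** A ** (M ** matrix_inv M)"
      by (simp add: matrix_mul_assoc)
    ultimately show "A = 0" by (simp add: normM_eq_norm matrix_inv_mult[OF assms])
  next
    fix A B :: "real^'n^'n"
    have "(M ** A + M ** B) ** M = M ** A ** M + M ** B ** M"
      by (simp add: matrix_matrix_mult_def vec_eq_iff sum.distrib distrib_right)
    then show "normM M (A + B) \<le> normM M A + normM M B"
      by (simp add: normM_eq_norm matrix_add_ldistrib norm_triangle_ineq)
  qed (simp_all add: normM_eq_norm matrix_scalar_ac scalar_matrix_assoc[symmetric])
  then obtain c where "0 < c" "\<And>A. c * norm A \<le> normM M A" by blast
  then show ?thesis by (intro exI[of _ "1 / c"]) (simp add: field_simps)
qed

lemma opnorm_le:
  fixes nv :: "real^'n \<Rightarrow> real" and A :: "real^'n^'n"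
  assumes "is_vnorm nv" "\<And>x. nv (A *v x) \<le> B * nv x"
  shows "opnorm nv A \<le> B"
  unfolding opnorm_def
proof (rule cSup_least)
  obtain b :: "real^'n" where "b \<noteq> 0" using nonzero_Basis nonempty_Basis by blast
  then have "nv ((1 / nv b) *\<^sub>R b) = 1" using assms(1) unfolding is_vnorm_def by force
  then show "(\<lambda>x. nv (A *v x)) ` {x. nv x = 1} \<noteq> {}" by blast
next
  fix y assume "y \<in> (\<lambda>x. nv (A *v x)) ` {x. nv x = 1}"
  then obtain x where "nv x = 1" "y = nv (A *v x)" by blast
  then show "y \<le> B" using assms(2)[of x] by simp
qed

lemma opnorm_le_euclidean_bound:
  fixes nv :: "real^'n \<Rightarrow> real"
  assumes "is_vnorm nv"
  shows "\<exists>K. \<forall>(A::real^'n^'n) L. 0 \<le> L \<longrightarrow> (\<forall>y. norm (A *v y) \<le> L * norm y) \<longrightarrow> opnorm nv A \<le> K * L"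
proof -
  obtain c C where c: "0 < c" "0 < C" "\<And>x. c * norm x \<le> nv x" "\<And>x. nv x \<le> C * norm x"
    using is_vnorm_equiv_norm[OF assms] by blast
  have "opnorm nv A \<le> C / c * L" if L: "0 \<le> L" and A: "\<And>y. norm (A *v y) \<le> L * norm y" for A L
  proof (rule opnorm_le[OF assms])
    fix y
    have "c * nv (A *v y) \<le> c * (C * norm (A *v y))" using c by simp
    also have "\<dots> \<le> C * L * (c * norm y)" using A[of y] c by (simp add: mult_left_mono)
    also have "\<dots> \<le> C * L * nv y"
      using L c by (intro mult_left_mono) auto
    finally show "nv (A *v y) \<le> C / c * L * nv y" using c by (simp add: field_simps)
  qed
  then show ?thesis by blast
qed

lemma norm_matrix_inv_perturbation_le:
  fixes A B H :: "real^'n^'n"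
  assumes "invertible H" "A ** B = mat 1" "2 * norm A * norm (H - B) \<le> 1"
  shows "norm (matrix_inv H *v y) \<le> 2 * norm A * norm y"
proof -
  define v where "v = matrix_inv H *v y"
  have Hv: "H *v v = y" unfolding v_def by (simp add: matrix_vector_mul_assoc matrix_inv_mult[OF assms(1)])
  have "v = A *v (H *v v - (H - B) *v v)"
    by (simp add: matrix_vector_mult_diff_rdistrib matrix_vector_mul_assoc assms(2))
  then have "norm v \<le> norm A * norm (H *v v - (H - B) *v v)"
    using norm_matrix_vector_mult_le by metis
  also have "\<dots> \<le> norm A * (norm y + norm (H - B) * norm v)"
    unfolding Hv
    by (intro mult_left_mono order_trans[OF norm_triangle_ineq4] add_left_mono
        norm_matrix_vector_mult_le) simp_all
  also have "\<dots> \<le> norm A * norm y + norm v / 2"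
    using assms(3) mult_right_mono[OF assms(3) norm_ge_zero[of v]] by (simp add: algebra_simps)
  finally show ?thesis unfolding v_def by simp
qed

lemma opnorm_bounded_near_inverse:
  fixes nv :: "real^'n \<Rightarrow> real" and J :: "real^'n^'n"
  assumes "is_vnorm nv" "invertible J"
  shows "\<exists>\<delta>>0. \<exists>B. \<forall>H. invertible H \<and> norm (H - matrix_inv J) \<le> \<delta>
           \<longrightarrow> opnorm nv H \<le> B \<and> opnorm nv (matrix_inv H) \<le> B"
proof -
  obtain K where K: "\<And>A L. 0 \<le> L \<Longrightarrow> (\<forall>y. norm (A *v y) \<le> L * norm y) \<Longrightarrow> opnorm nv A \<le> K * L"
    using opnorm_le_euclidean_bound[OF assms(1)] by blast
  define \<delta> where "\<delta> = 1 / (2 * (norm J + 1))"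
  define L where "L = max (norm (matrix_inv J) + \<delta>) (2 * norm J)"
  have \<delta>: "0 < \<delta>" "2 * norm J * \<delta> \<le> 1"
    unfolding \<delta>_def by (simp_all add: add_nonneg_pos divide_le_eq)
  have "opnorm nv H \<le> K * L \<and> opnorm nv (matrix_inv H) \<le> K * L"
    if H: "invertible H" "norm (H - matrix_inv J) \<le> \<delta>" for H
  proof (intro conjI K allI)
    fix y
    have "H *v y = matrix_inv J *v y + (H - matrix_inv J) *v y"
      by (simp add: matrix_vector_mult_diff_rdistrib)
    then have "norm (H *v y) \<le> norm (matrix_inv J *v y) + norm ((H - matrix_inv J) *v y)"
      by (metis norm_triangle_ineq)
    also have "\<dots> \<le> (norm (matrix_inv J) + \<delta>) * norm y"
      using norm_matrix_vector_mult_le[of "matrix_inv J" y]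
        norm_matrix_vector_mult_le[of "H - matrix_inv J" y] mult_right_mono[OF H(2) norm_ge_zero[of y]]
      unfolding distrib_right by linarith
    finally show "norm (H *v y) \<le> L * norm y"
      unfolding L_def by (smt (verit) max.cobounded1 mult_right_mono norm_ge_zero)
    have "2 * norm J * norm (H - matrix_inv J) \<le> 1"
      using mult_left_mono[OF H(2), of "2 * norm J"] \<delta>(2) by simp
    then have "norm (matrix_inv H *v y) \<le> 2 * norm J * norm y"
      by (rule norm_matrix_inv_perturbation_le[OF H(1) matrix_inv_mult(1)[OF assms(2)]])
    then show "norm (matrix_inv H *v y) \<le> L * norm y"
      unfolding L_def by (smt (verit) max.cobounded2 mult_right_mono norm_ge_zero)
  qed (use \<delta>(1) in \<open>auto simp: L_def max_def\<close>)
  with \<delta>(1) show ?thesis by blast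
qed

lemma quasi_newton_step_contracts:
  fixes G :: "real^'n \<Rightarrow> real^'n"
  assumes G': "(G has_derivative (\<lambda>h. J *v h)) (at xs)" and G0: "G xs = 0"
    and J: "invertible J" and r: "0 < r"
  shows "\<exists>\<epsilon>>0. \<exists>\<delta>>0. \<forall>x H. norm (x - xs) < \<epsilon> \<and> norm (H - matrix_inv J) \<le> \<delta>
           \<longrightarrow> norm (x - H *v G x - xs) \<le> r * norm (x - xs)"
proof -
  define Ji where "Ji = matrix_inv J"
  define \<rho> where "\<rho> = r / (2 * (norm Ji + 1))"
  define \<delta> where "\<delta> = r / (2 * (norm J + \<rho>))"
  have \<rho>: "0 < \<rho>" "norm Ji * \<rho> \<le> r / 2"
    using r unfolding \<rho>_def by (auto simp: field_simps add_pos_nonneg)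
  have "0 < norm J + \<rho>" using \<rho>(1) by (simp add: add_nonneg_pos)
  then have \<delta>: "0 < \<delta>" "\<delta> * (norm J + \<rho>) = r / 2"
    using r unfolding \<delta>_def by (simp_all add: field_simps)
  obtain \<epsilon> where \<epsilon>: "0 < \<epsilon>"
    and lin: "\<And>x. norm (x - xs) < \<epsilon> \<Longrightarrow> norm (G x - J *v (x - xs)) \<le> \<rho> * norm (x - xs)"
    using G'[unfolded has_derivative_at_alt] \<rho>(1) G0 by fastforce
  have "norm (x - H *v G x - xs) \<le> r * norm (x - xs)"
    if x: "norm (x - xs) < \<epsilon>" and H: "norm (H - Ji) \<le> \<delta>" for x H
  proof -
    define w where "w = x - xs"
    define R where "R = G x - J *v w"
    have R: "norm R \<le> \<rho> * norm w" using lin[OF x] unfolding R_def w_def .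
    have "x - H *v G x - xs = - (Ji *v R) - (H - Ji) *v (J *v w + R)"
      unfolding R_def w_def
      by (simp add: algebra_simps matrix_vector_mul_assoc matrix_inv_mult(2)[OF J, folded Ji_def])
    then have "norm (x - H *v G x - xs) \<le> norm (Ji *v R) + norm ((H - Ji) *v (J *v w + R))"
      by (metis norm_minus_cancel norm_triangle_ineq4)
    also have "\<dots> \<le> norm Ji * norm R + norm (H - Ji) * (norm J * norm w + norm R)"
    proof (intro add_mono order_trans[OF norm_matrix_vector_mult_le] mult_left_mono)
      show "norm (J *v w + R) \<le> norm J * norm w + norm R"
        by (rule order_trans[OF norm_triangle_ineq]) (simp add: norm_matrix_vector_mult_le)
    qed simp_all
    also have "\<dots> \<le> norm Ji * (\<rho> * norm w) + \<delta> * (norm J * norm w + \<rho> * norm w)"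
      using R H \<delta>(1) by (intro add_mono mult_mono) simp_all
    also have "\<dots> = (norm Ji * \<rho> + \<delta> * (norm J + \<rho>)) * norm w"
      by (simp add: algebra_simps)
    also have "\<dots> \<le> r * norm w" using \<rho>(2) \<delta>(2) by (simp add: mult_right_mono)
    finally show ?thesis unfolding w_def .
  qed
  with \<epsilon> \<delta>(1) show ?thesis unfolding Ji_def by blast
qed

lemma quasi_newton_step_contracts_vnorm:
  fixes G :: "real^'n \<Rightarrow> real^'n" and nv :: "real^'n \<Rightarrow> real"
  assumes nv: "is_vnorm nv" and G': "(G has_derivative (\<lambda>h. J *v h)) (at xs)"
    and G0: "G xs = 0" and J: "invertible J" and r: "0 < r"
  shows "\<exists>\<epsilon>>0. \<exists>\<delta>>0. \<forall>x H. nv (x - xs) < \<epsilon> \<and> norm (H - matrix_inv J) \<le> \<delta>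
           \<longrightarrow> nv (x - H *v G x - xs) \<le> r * nv (x - xs)"
proof -
  obtain c C where c: "0 < c" "0 < C" "\<And>x. c * norm x \<le> nv x" "\<And>x. nv x \<le> C * norm x"
    using is_vnorm_equiv_norm[OF nv] by blast
  obtain \<epsilon> \<delta> where \<epsilon>\<delta>: "0 < \<epsilon>" "0 < \<delta>" and contr: "\<And>x H. norm (x - xs) < \<epsilon> \<Longrightarrow>
      norm (H - matrix_inv J) \<le> \<delta> \<Longrightarrow> norm (x - H *v G x - xs) \<le> r * c / C * norm (x - xs)"
    using quasi_newton_step_contracts[OF G' G0 J, where r = "r * c / C"] r c by auto
  have "nv (x - H *v G x - xs) \<le> r * nv (x - xs)"
    if x: "nv (x - xs) < c * \<epsilon>" and H: "norm (H - matrix_inv J) \<le> \<delta>" for x H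
  proof -
    have "norm (x - xs) < \<epsilon>" using c(1) c(3)[of "x - xs"] x by (metis mult_less_cancel_left_pos order_le_less_trans)
    then have "C * norm (x - H *v G x - xs) \<le> r * (c * norm (x - xs))"
      using contr[OF _ H] c(2) by (simp add: field_simps)
    then show ?thesis using c(3,4) r by (smt (verit) mult_left_mono)
  qed
  with \<epsilon>\<delta> c(1) show ?thesis by (intro exI[of _ "c * \<epsilon>"] exI[of _ \<delta>]) auto
qed

lemma bounded_deterioration_invariant:
  fixes e \<eta> :: "nat \<Rightarrow> real"
  assumes r: "0 < r" "r < 1" and d: "0 < d" and \<alpha>: "0 \<le> \<alpha>1" "0 \<le> \<alpha>2"
    and nonneg: "\<And>k. 0 \<le> e k" "\<And>k. 0 \<le> \<eta> k"
    and e0: "e 0 \<le> \<epsilon>"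
    and \<eta>0: "(\<eta> 0 + 1) * exp ((\<alpha>1 + \<alpha>2) * e 0 powr d / (1 - r powr d)) \<le> \<delta> + 1"
    and step: "\<And>k. e k \<le> \<epsilon> \<Longrightarrow> \<eta> k \<le> \<delta> \<Longrightarrow>
      e (Suc k) \<le> r * e k \<and> \<eta> (Suc k) \<le> (1 + \<alpha>1 * e k powr d) * \<eta> k + \<alpha>2 * e k powr d"
  shows "e k \<le> r ^ k * e 0 \<and> \<eta> k \<le> \<delta>"
proof -
  define q where "q = r powr d"
  define \<gamma> where "\<gamma> = \<alpha>1 + \<alpha>2"
  define E where "E = e 0 powr d"
  \<comment> \<open>T k bounds the accumulated growth exponent: the sum of \<gamma> e_j^d \<le> \<gamma> q^j E over j < k\<close>
  define T where "T k = \<gamma> * E * (1 - q ^ k) / (1 - q)" for k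
  have q: "0 < q" "q < 1" unfolding q_def using r d powr_less_mono2[of d r 1] by auto
  have \<gamma>E: "0 \<le> \<gamma> * E" unfolding \<gamma>_def E_def using \<alpha> by simp
  have \<eta>_le: "\<eta> k \<le> \<delta>" if "\<eta> k + 1 \<le> (\<eta> 0 + 1) * exp (T k)" for k
  proof -
    have "T k \<le> \<gamma> * E / (1 - q)"
      unfolding T_def using q \<gamma>E by (simp add: divide_right_mono mult_left_le)
    then have "(\<eta> 0 + 1) * exp (T k) \<le> \<delta> + 1"
      using \<eta>0 nonneg(2)[of 0] unfolding q_def \<gamma>_def E_def
      by (smt (verit) exp_le_cancel_iff mult_left_mono)
    with that show ?thesis by simp
  qed
  have "e k \<le> r ^ k * e 0 \<and> e k powr d \<le> q ^ k * E \<and> \<eta> k + 1 \<le> (\<eta> 0 + 1) * exp (T k)"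
  proof (induction k)
    case 0
    show ?case by (simp add: E_def T_def)
  next
    case (Suc k)
    have "e k \<le> \<epsilon>"
      using Suc.IH e0 r nonneg(1)[of 0] by (smt (verit) mult_left_le_one_le power_le_one zero_le_power)
    with Suc.IH \<eta>_le have e_step: "e (Suc k) \<le> r * e k"
      and \<eta>_step: "\<eta> (Suc k) \<le> (1 + \<alpha>1 * e k powr d) * \<eta> k + \<alpha>2 * e k powr d"
      using step by blast+
    define p where "p = e k powr d"
    have "e (Suc k) powr d \<le> q * p"
      unfolding q_def p_def using e_step d nonneg(1)[of "Suc k"]
      by (metis powr_mono2 powr_mult less_imp_le r(1) nonneg(1))
    also have "\<dots> \<le> q * (q ^ k * E)" using Suc.IH q unfolding p_def by simp
    finally have p_step: "e (Suc k) powr d \<le> q ^ Suc k * E" by simp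
    have p: "0 \<le> p" unfolding p_def by simp
    have "\<eta> (Suc k) + 1 \<le> (1 + \<gamma> * p) * (\<eta> k + 1)"
      using \<eta>_step mult_nonneg_nonneg[OF \<alpha>(1) p]
        mult_nonneg_nonneg[OF \<alpha>(2) mult_nonneg_nonneg[OF nonneg(2)[of k] p]]
      unfolding \<gamma>_def p_def by (simp add: algebra_simps)
    also have "\<dots> \<le> exp (\<gamma> * p) * (\<eta> k + 1)"
      using nonneg(2)[of k] exp_ge_add_one_self by (simp add: mult_right_mono add.commute)
    also have "\<dots> \<le> exp (\<gamma> * q ^ k * E) * ((\<eta> 0 + 1) * exp (T k))"
      using Suc.IH \<alpha> nonneg(2)[of k] unfolding \<gamma>_def p_def
      by (intro mult_mono) (auto simp: mult.assoc mult_left_mono)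
    also have "\<dots> = (\<eta> 0 + 1) * exp (T (Suc k))"
      unfolding T_def using q by (simp add: field_simps flip: exp_add)
    finally show ?case using Suc.IH e_step p_step r by (simp add: order_trans mult_left_mono)
  qed
  then show ?thesis using \<eta>_le by blast
qed

lemma qn_iter_Suc:
  "fst (qn_iter F x0 H0 (Suc k)) =
     fst (qn_iter F x0 H0 k) - snd (qn_iter F x0 H0 k) *v resid F (fst (qn_iter F x0 H0 k))"
  "snd (qn_iter F x0 H0 (Suc k)) = Hbar F (fst (qn_iter F x0 H0 k)) (snd (qn_iter F x0 H0 k))"
  by (simp_all add: split_beta Let_def)

lemma qn_iter_bounded_deterioration:
  fixes F :: "real^'n \<Rightarrow> real^'n" and nv :: "real^'n \<Rightarrow> real" and M Hs :: "real^'n^'n"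
  assumes nv: "is_vnorm nv" and r: "0 < r" "r < 1" and d: "0 < d" and \<alpha>: "0 \<le> \<alpha>1" "0 \<le> \<alpha>2"
    and \<epsilon>: "0 < \<epsilon>" and \<delta>: "0 < \<delta>"
    and step: "\<And>x H. nv (x - xs) \<le> \<epsilon> \<Longrightarrow> normM M (H - Hs) \<le> \<delta> \<Longrightarrow>
      nv (x - H *v resid F x - xs) \<le> r * nv (x - xs) \<and>
      normM M (Hbar F x H - Hs) \<le> (1 + \<alpha>1 * nv (x - xs) powr d) * normM M (H - Hs) + \<alpha>2 * nv (x - xs) powr d"
  shows "\<exists>\<epsilon>0>0. \<exists>\<delta>0>0. \<forall>x0 H0. nv (x0 - xs) < \<epsilon>0 \<and> normM M (H0 - Hs) < \<delta>0 \<longrightarrow>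
    (\<forall>k. nv (fst (qn_iter F x0 H0 k) - xs) \<le> r ^ k * nv (x0 - xs)
         \<and> nv (fst (qn_iter F x0 H0 k) - xs) \<le> \<epsilon> \<and> normM M (snd (qn_iter F x0 H0 k) - Hs) \<le> \<delta>)"
proof -
  define \<mu> where "\<mu> = (\<delta> + 1) / (\<delta> / 2 + 1)"
  define y where "y = (1 - r powr d) * ln \<mu> / (\<alpha>1 + \<alpha>2 + 1)"
  \<comment> \<open>e0 < \<epsilon>0 keeps the exponent of bounded_deterioration_invariant below ln \<mu>\<close>
  define \<epsilon>0 where "\<epsilon>0 = min \<epsilon> (y powr (1 / d))"
  have q: "r powr d < 1" using r d powr_less_mono2[of d r 1] by simp
  have \<mu>: "1 < \<mu>" unfolding \<mu>_def using \<delta> by simp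
  have y: "0 < y" unfolding y_def using q \<mu> \<alpha> by simp
  have exp_bound: "(\<eta>0 + 1) * exp ((\<alpha>1 + \<alpha>2) * e0 powr d / (1 - r powr d)) \<le> \<delta> + 1"
    if e0: "0 \<le> e0" "e0 < \<epsilon>0" and \<eta>0: "0 \<le> \<eta>0" "\<eta>0 < \<delta> / 2" for e0 \<eta>0
  proof -
    have "e0 powr d \<le> (y powr (1 / d)) powr d"
      using e0 d unfolding \<epsilon>0_def by (intro powr_mono2) auto
    then have "e0 powr d \<le> y" using d y by (simp add: powr_powr)
    then have "(\<alpha>1 + \<alpha>2) * e0 powr d / (1 - r powr d) \<le> ln \<mu>"
      using q \<alpha> y unfolding y_def
      by (simp add: field_simps) (smt (verit) mult_left_mono mult_right_mono ln_gt_zero[OF \<mu>] powr_ge_zero)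
    then have "exp ((\<alpha>1 + \<alpha>2) * e0 powr d / (1 - r powr d)) \<le> \<mu>" using \<mu> by (simp add: ln_ge_iff)
    then have "(\<eta>0 + 1) * exp ((\<alpha>1 + \<alpha>2) * e0 powr d / (1 - r powr d)) \<le> (\<delta> / 2 + 1) * \<mu>"
      using \<eta>0 by (intro mult_mono) auto
    also have "\<dots> = \<delta> + 1" unfolding \<mu>_def using \<delta> by simp
    finally show ?thesis .
  qed
  have nonneg: "0 \<le> nv x" "0 \<le> normM M H" for x H
    using nv by (simp_all add: is_vnorm_def normM_eq_norm)
  have iterates: "nv (fst (qn_iter F x0 H0 k) - xs) \<le> r ^ k * nv (fst (qn_iter F x0 H0 0) - xs)
      \<and> normM M (snd (qn_iter F x0 H0 k) - Hs) \<le> \<delta>"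
    if x0: "nv (x0 - xs) < \<epsilon>0" and H0: "normM M (H0 - Hs) < \<delta> / 2" for x0 H0 k
  proof (rule bounded_deterioration_invariant[OF r d \<alpha>, where e = "\<lambda>k. nv (fst (qn_iter F x0 H0 k) - xs)"
        and \<eta> = "\<lambda>k. normM M (snd (qn_iter F x0 H0 k) - Hs)"])
    show "nv (fst (qn_iter F x0 H0 0) - xs) \<le> \<epsilon>" using x0 unfolding \<epsilon>0_def by simp
    show "(normM M (snd (qn_iter F x0 H0 0) - Hs) + 1) *
        exp ((\<alpha>1 + \<alpha>2) * nv (fst (qn_iter F x0 H0 0) - xs) powr d / (1 - r powr d)) \<le> \<delta> + 1"
      using exp_bound[OF nonneg(1) x0 nonneg(2) H0] by simp
  qed (simp_all add: nonneg qn_iter_Suc step del: qn_iter.simps(2))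
  moreover have "nv (fst (qn_iter F x0 H0 k) - xs) \<le> \<epsilon>"
    if "nv (x0 - xs) < \<epsilon>0" "normM M (H0 - Hs) < \<delta> / 2" for x0 H0 k
  proof -
    have "r ^ k * nv (x0 - xs) \<le> nv (x0 - xs)"
      using r nonneg(1) by (simp add: mult_left_le_one_le power_le_one)
    then show ?thesis using iterates[OF that, of k] that(1) unfolding \<epsilon>0_def by simp
  qed
  moreover have "0 < \<epsilon>0" unfolding \<epsilon>0_def using \<epsilon> y by simp
  ultimately show ?thesis using \<delta>
    by (intro exI[of _ \<epsilon>0], intro conjI exI[of _ "\<delta> / 2"]) auto
qed

lemma quasi_newton_local_estimates:
  fixes G :: "real^'n \<Rightarrow> real^'n" and nv :: "real^'n \<Rightarrow> real" and M J :: "real^'n^'n"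
  assumes nv: "is_vnorm nv" and M: "invertible M"
    and G': "(G has_derivative (\<lambda>h. J *v h)) (at xs)" and G0: "G xs = 0" and J: "invertible J"
    and N1: "xs \<in> interior N1" and N2: "matrix_inv J \<in> interior N2" "\<forall>H\<in>N2. invertible H"
    and r: "0 < r"
  shows "\<exists>\<epsilon>>0. \<exists>\<delta>>0. \<exists>B. \<forall>x H. nv (x - xs) \<le> \<epsilon> \<and> normM M (H - matrix_inv J) \<le> \<delta> \<longrightarrow>
           x \<in> N1 \<and> H \<in> N2 \<and> nv (x - H *v G x - xs) \<le> r * nv (x - xs)
           \<and> opnorm nv H \<le> B \<and> opnorm nv (matrix_inv H) \<le> B"
proof -
  obtain c where c: "0 < c" "\<And>x. c * norm x \<le> nv x"
    using is_vnorm_equiv_norm[OF nv] by blast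
  obtain \<kappa> where \<kappa>: "0 < \<kappa>" "\<And>A. norm A \<le> \<kappa> * normM M A"
    using norm_le_normM[OF M] by blast
  obtain \<epsilon>1 \<delta>1 where \<epsilon>1: "0 < \<epsilon>1" "0 < \<delta>1" and contracts: "\<And>x H. nv (x - xs) < \<epsilon>1 \<Longrightarrow>
      norm (H - matrix_inv J) \<le> \<delta>1 \<Longrightarrow> nv (x - H *v G x - xs) \<le> r * nv (x - xs)"
    using quasi_newton_step_contracts_vnorm[OF nv G' G0 J r] by blast
  obtain \<delta>2 B where \<delta>2: "0 < \<delta>2" and bounded: "\<And>H. invertible H \<Longrightarrow> norm (H - matrix_inv J) \<le> \<delta>2 \<Longrightarrow>
      opnorm nv H \<le> B \<and> opnorm nv (matrix_inv H) \<le> B"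
    using opnorm_bounded_near_inverse[OF nv J] by blast
  obtain s1 where s1: "0 < s1" "ball xs s1 \<subseteq> N1" using N1 mem_interior by blast
  obtain s2 where s2: "0 < s2" "ball (matrix_inv J) s2 \<subseteq> N2" using N2(1) mem_interior by blast
  define \<epsilon> where "\<epsilon> = min \<epsilon>1 (c * s1) / 2"
  define \<delta> where "\<delta> = min (min \<delta>1 \<delta>2) (s2 / 2) / \<kappa>"
  have "x \<in> N1 \<and> H \<in> N2 \<and> nv (x - H *v G x - xs) \<le> r * nv (x - xs)
      \<and> opnorm nv H \<le> B \<and> opnorm nv (matrix_inv H) \<le> B"
    if x: "nv (x - xs) \<le> \<epsilon>" and H: "normM M (H - matrix_inv J) \<le> \<delta>" for x H
  proof -
    have "c * norm (x - xs) < c * s1"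
      using c(2)[of "x - xs"] x min.cobounded2[of \<epsilon>1 "c * s1"] mult_pos_pos[OF c(1) s1(1)]
      unfolding \<epsilon>_def by linarith
    then have "x \<in> N1" using s1 c(1) by (auto simp: dist_norm norm_minus_commute)
    have H_near: "norm (H - matrix_inv J) \<le> min (min \<delta>1 \<delta>2) (s2 / 2)"
      using \<kappa>(2)[of "H - matrix_inv J"] mult_left_mono[OF H, of \<kappa>] \<kappa>(1) unfolding \<delta>_def by simp
    then have "H \<in> N2" using s2 by (auto simp: dist_norm norm_minus_commute)
    show ?thesis
      using \<open>x \<in> N1\<close> \<open>H \<in> N2\<close> contracts bounded N2(2) x H_near \<epsilon>1 unfolding \<epsilon>_def by auto
  qed
  moreover have "0 < \<epsilon>" "0 < \<delta>" unfolding \<epsilon>_def \<delta>_def using \<epsilon>1 \<delta>2 s1 s2 c(1) \<kappa>(1) by auto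
  ultimately show ?thesis by blast
qed

lemma vnorm_LIMSEQ_geometric:
  fixes X :: "nat \<Rightarrow> real^'n"
  assumes nv: "is_vnorm nv" and r: "0 \<le> r" "r < 1" and bound: "\<And>k. nv (X k - a) \<le> r ^ k * b"
  shows "X \<longlonglongrightarrow> a"
proof -
  obtain c where c: "0 < c" "\<And>x. c * norm x \<le> nv x"
    using is_vnorm_equiv_norm[OF nv] by blast
  have "(\<lambda>k. X k - a) \<longlonglongrightarrow> 0"
  proof (rule Lim_null_comparison)
    show "\<forall>\<^sub>F k in sequentially. norm (X k - a) \<le> r ^ k * (b / c)"
      using c order_trans[OF c(2) bound] by (simp add: field_simps)
    show "(\<lambda>k. r ^ k * (b / c)) \<longlonglongrightarrow> 0"
      using r by (intro tendsto_mult_left_zero LIMSEQ_power_zero) auto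
  qed
  then show ?thesis by (simp add: LIM_zero_iff)
qed

theorem theorem1:
  fixes F :: "real^'n \<Rightarrow> real^'n"
    and nv :: "real^'n \<Rightarrow> real"
    and xs :: "real^'n"
    and S D N1 :: "(real^'n) set"
    and N2 :: "(real^'n^'n) set"
    and J :: "real^'n \<Rightarrow> real^'n^'n"
    and M :: "real^'n^'n"
    and \<tau> d K \<alpha>1 \<alpha>2 :: real
  assumes nv: "is_vnorm nv"
    and MM_S: "xs \<in> interior S"
    and MM_tau: "0 < \<tau>" "\<tau> < 1"
    and MM_rate: "\<forall>x\<in>S. nv (F x - xs) \<le> \<tau> * nv (x - xs)"
    and M_sym: "transpose M = M" and M_inv: "invertible M"
    and A1_D: "open D" "convex D" "xs \<in> D"
    and A1_deriv: "\<forall>x\<in>D. (resid F has_derivative (\<lambda>h. J x *v h)) (at x)"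
    and A1_zero: "resid F xs = 0"
    and A1_inv: "invertible (J xs)"
    and A1_d: "d > 0"
    and A1_lip: "\<forall>x\<in>D. opnorm nv (J x - J xs) \<le> K * nv (x - xs) powr d"
    and A2_N1: "xs \<in> interior N1" "N1 \<subseteq> D \<inter> S"
    and A2_N2: "matrix_inv (J xs) \<in> interior N2" "\<forall>H\<in>N2. invertible H"
    and A2_welldef: "\<forall>x\<in>N1. x \<noteq> xs \<longrightarrow> vvec F x \<noteq> 0"
    and A2_alpha: "\<alpha>1 \<ge> 0" "\<alpha>2 \<ge> 0"
    and A2_ineq: "\<forall>x\<in>N1. \<forall>H\<in>N2.
        normM M (Hbar F x H - matrix_inv (J xs))
          \<le> (1 + \<alpha>1 * max (nv (F x - xs) powr d) (nv (x - xs) powr d))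
               * normM M (H - matrix_inv (J xs))
            + \<alpha>2 * max (nv (F x - xs) powr d) (nv (x - xs) powr d)"
  shows "\<forall>r. 0 < r \<and> r < 1 \<longrightarrow>
    (\<exists>\<epsilon>>0. \<exists>\<delta>>0. \<forall>x0 H0.
       nv (x0 - xs) < \<epsilon> \<and> normM M (H0 - matrix_inv (J xs)) < \<delta> \<longrightarrow>
         (\<forall>k. fst (qn_iter F x0 H0 k) \<in> N1 \<and> snd (qn_iter F x0 H0 k) \<in> N2)
       \<and> (\<lambda>k. fst (qn_iter F x0 H0 k)) \<longlonglongrightarrow> xs
       \<and> (\<forall>k. nv (fst (qn_iter F x0 H0 (Suc k)) - xs) \<le> r * nv (fst (qn_iter F x0 H0 k) - xs))
       \<and> (\<exists>B. \<forall>k. opnorm nv (snd (qn_iter F x0 H0 k)) \<le> B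
                 \<and> opnorm nv (matrix_inv (snd (qn_iter F x0 H0 k))) \<le> B))"
proof (intro allI impI)
  fix r :: real
  assume "0 < r \<and> r < 1"
  then have r: "0 < r" "r < 1" by simp_all
  define Ji where "Ji = matrix_inv (J xs)"
  have nv_nonneg: "0 \<le> nv x" for x using nv by (simp add: is_vnorm_def)
  obtain \<epsilon> \<delta> B where \<epsilon>\<delta>: "0 < \<epsilon>" "0 < \<delta>" and local: "\<And>x H. nv (x - xs) \<le> \<epsilon> \<Longrightarrow>
      normM M (H - Ji) \<le> \<delta> \<Longrightarrow> x \<in> N1 \<and> H \<in> N2 \<and> nv (x - H *v resid F x - xs) \<le> r * nv (x - xs)
        \<and> opnorm nv H \<le> B \<and> opnorm nv (matrix_inv H) \<le> B"
    using quasi_newton_local_estimates[OF nv M_inv A1_deriv[rule_format, OF A1_D(3)] A1_zero A1_inv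
        A2_N1(1) A2_N2 r(1)]
    unfolding Ji_def by blast
  have MM_powr: "max (nv (F x - xs) powr d) (nv (x - xs) powr d) = nv (x - xs) powr d" if "x \<in> N1" for x
  proof -
    have "nv (F x - xs) \<le> \<tau> * nv (x - xs)" using MM_rate A2_N1(2) that by blast
    also have "\<dots> \<le> nv (x - xs)" using MM_tau nv_nonneg by (simp add: mult_left_le_one_le)
    finally show ?thesis using A1_d nv_nonneg by (simp add: max_absorb2 powr_mono2)
  qed
  have step: "nv (x - H *v resid F x - xs) \<le> r * nv (x - xs) \<and>
      normM M (Hbar F x H - Ji) \<le> (1 + \<alpha>1 * nv (x - xs) powr d) * normM M (H - Ji) + \<alpha>2 * nv (x - xs) powr d"
    if "nv (x - xs) \<le> \<epsilon>" "normM M (H - Ji) \<le> \<delta>" for x H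
    using local[OF that] A2_ineq MM_powr unfolding Ji_def by simp
  obtain \<epsilon>0 \<delta>0 where "0 < \<epsilon>0" "0 < \<delta>0" and iterates: "\<And>x0 H0 k. nv (x0 - xs) < \<epsilon>0 \<Longrightarrow>
      normM M (H0 - Ji) < \<delta>0 \<Longrightarrow> nv (fst (qn_iter F x0 H0 k) - xs) \<le> r ^ k * nv (x0 - xs)
        \<and> nv (fst (qn_iter F x0 H0 k) - xs) \<le> \<epsilon> \<and> normM M (snd (qn_iter F x0 H0 k) - Ji) \<le> \<delta>"
    using qn_iter_bounded_deterioration[OF nv r A1_d A2_alpha \<epsilon>\<delta> step] by blast
  show "\<exists>\<epsilon>>0. \<exists>\<delta>>0. \<forall>x0 H0.
       nv (x0 - xs) < \<epsilon> \<and> normM M (H0 - matrix_inv (J xs)) < \<delta> \<longrightarrow>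
         (\<forall>k. fst (qn_iter F x0 H0 k) \<in> N1 \<and> snd (qn_iter F x0 H0 k) \<in> N2)
       \<and> (\<lambda>k. fst (qn_iter F x0 H0 k)) \<longlonglongrightarrow> xs
       \<and> (\<forall>k. nv (fst (qn_iter F x0 H0 (Suc k)) - xs) \<le> r * nv (fst (qn_iter F x0 H0 k) - xs))
       \<and> (\<exists>B. \<forall>k. opnorm nv (snd (qn_iter F x0 H0 k)) \<le> B
                 \<and> opnorm nv (matrix_inv (snd (qn_iter F x0 H0 k))) \<le> B)"
  proof (rule exI[of _ \<epsilon>0], rule conjI[OF \<open>0 < \<epsilon>0\<close>], rule exI[of _ \<delta>0],
      rule conjI[OF \<open>0 < \<delta>0\<close>], intro allI impI conjI)
    fix x0 H0
    assume "nv (x0 - xs) < \<epsilon>0 \<and> normM M (H0 - matrix_inv (J xs)) < \<delta>0"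
    then have it: "nv (fst (qn_iter F x0 H0 k) - xs) \<le> r ^ k * nv (x0 - xs)"
      and loc: "fst (qn_iter F x0 H0 k) \<in> N1 \<and> snd (qn_iter F x0 H0 k) \<in> N2
        \<and> nv (fst (qn_iter F x0 H0 (Suc k)) - xs) \<le> r * nv (fst (qn_iter F x0 H0 k) - xs)
        \<and> opnorm nv (snd (qn_iter F x0 H0 k)) \<le> B \<and> opnorm nv (matrix_inv (snd (qn_iter F x0 H0 k))) \<le> B"
      for k
      using iterates[of x0 H0 k] local[of "fst (qn_iter F x0 H0 k)" "snd (qn_iter F x0 H0 k)"]
      unfolding Ji_def by (simp_all add: qn_iter_Suc del: qn_iter.simps(2))
    show "(\<lambda>k. fst (qn_iter F x0 H0 k)) \<longlonglongrightarrow> xs"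
      using vnorm_LIMSEQ_geometric[OF nv _ r(2) it] r(1) by simp
    show "\<exists>B. \<forall>k. opnorm nv (snd (qn_iter F x0 H0 k)) \<le> B
        \<and> opnorm nv (matrix_inv (snd (qn_iter F x0 H0 k))) \<le> B"
      using loc by blast
    show "fst (qn_iter F x0 H0 k) \<in> N1" "snd (qn_iter F x0 H0 k) \<in> N2"
      "nv (fst (qn_iter F x0 H0 (Suc k)) - xs) \<le> r * nv (fst (qn_iter F x0 H0 k) - xs)" for k
      using loc by blast+
  qed
qed

end
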